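(* Let $Q$ be a rational function with distinct poles $z_1,\dotsc,z_d$, $d\ge2$, of orders $r_1,\dotsc,r_d$; put $P=\prod_i(z-z_i)^{r_i}$, $P_0=\prod_i(z-z_i)$, write $Q^{(n)}=\frac{\alpha_nR_n}{PP_0^n}$ with $\alpha_n\in\mathbb{C}$, $R_n$ monic, and $m_n=\deg R_n$. Assume ( * ) the closed unit disk $\{|z|\le1\}$ is disjoint from the Voronoi 1-skeleton $\mathrm{Vor}_S$ of $S=\{z_1,\dotsc,z_d\}$, and ( ** ) $|z_i|\ge1$ for all $i$. For $R>0$ let $D_R=\{|z|\le R\}$, and for $K\subset\mathbb{C}$ let $|z_{K,n}|=\prod_{z\in K,\,R_n(z)=0}|z|$ (zeroes with multiplicity; equal to $1$ if $R_n$ has no zeroes in $K$). Then for $K=D_R$ and for $K=\mathbb{C}\setminus D_R$ the sequence $|z_{K,n}|^{1/n}$ is bounded, and there are constants $C$ and $N$ such that $0\le\frac{1}{m_n}\log|z_{K,n}|\le C$ for all $n\ge N$.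
   Context: With $\Phi(z)=\min_k|z-z_k|$, the Voronoi edges are $V_{ij}=\{z:\Phi(z)=|z-z_i|=|z-z_j|\}$ ($i\ne j$) and $\mathrm{Vor}_S=\bigcup_{i<j}V_{ij}$. *)

theory Defs
  imports "HOL-Analysis.Analysis" "HOL-Computational_Algebra.Polynomial"
begin

definition polP :: "nat \<Rightarrow> (nat \<Rightarrow> complex) \<Rightarrow> (nat \<Rightarrow> nat) \<Rightarrow> complex poly" where
  "polP d z r = (\<Prod>i<d. [:- z i, 1:] ^ r i)"

definition polP0 :: "nat \<Rightarrow> (nat \<Rightarrow> complex) \<Rightarrow> complex poly" where
  "polP0 d z = (\<Prod>i<d. [:- z i, 1:])"

text \<open>The rational function Q = A / P (A not vanishing at any z i).\<close>
definition ratQ :: "complex poly \<Rightarrow> nat \<Rightarrow> (nat \<Rightarrow> complex) \<Rightarrow> (nat \<Rightarrow> nat) \<Rightarrow> complex \<Rightarrow> complex" where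
  "ratQ A d z r = (\<lambda>w. poly A w / poly (polP d z r) w)"

text \<open>The numerator alpha_n R_n:  Q^(n) = alpha_n R_n / (P P0^n) away from the poles.\<close>
definition numQ :: "complex poly \<Rightarrow> nat \<Rightarrow> (nat \<Rightarrow> complex) \<Rightarrow> (nat \<Rightarrow> nat) \<Rightarrow> nat \<Rightarrow> complex poly" where
  "numQ A d z r n = (THE p. \<forall>w. poly (polP d z r) w \<noteq> 0 \<longrightarrow>
      (deriv ^^ n) (ratQ A d z r) w = poly p w / (poly (polP d z r) w * poly (polP0 d z) w ^ n))"

definition polR :: "complex poly \<Rightarrow> nat \<Rightarrow> (nat \<Rightarrow> complex) \<Rightarrow> (nat \<Rightarrow> nat) \<Rightarrow> nat \<Rightarrow> complex poly" where
  "polR A d z r n = smult (inverse (lead_coeff (numQ A d z r n))) (numQ A d z r n)"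

definition zprod :: "complex poly \<Rightarrow> complex set \<Rightarrow> real" where
  "zprod p K = (\<Prod>w\<in>{w\<in>K. poly p w = 0}. norm w ^ order w p)"

definition Phi :: "nat \<Rightarrow> (nat \<Rightarrow> complex) \<Rightarrow> complex \<Rightarrow> real" where
  "Phi d z w = Min ((\<lambda>k. cmod (w - z k)) ` {..<d})"

definition Vedge :: "nat \<Rightarrow> (nat \<Rightarrow> complex) \<Rightarrow> nat \<Rightarrow> nat \<Rightarrow> complex set" where
  "Vedge d z i j = {w. Phi d z w = cmod (w - z i) \<and> cmod (w - z i) = cmod (w - z j)}"

definition Vor :: "nat \<Rightarrow> (nat \<Rightarrow> complex) \<Rightarrow> complex set" where
  "Vor d z = (\<Union>i<d. \<Union>j<d. if i < j then Vedge d z i j else {})"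

end

theory Submission
  imports Defs "HOL-Complex_Analysis.Complex_Analysis" "HOL-Computational_Algebra.Fundamental_Theorem_Algebra"
begin

text \<open>
  Write Q^(n) = N_n / (P P0^n). Differentiating gives N_(n+1) = P0 N_n' - E_n N_n, where
  E_n = P0 (P P0^n)' / (P P0^n) is a polynomial. Multiples of P in the numerator of Q are
  annihilated by differentiating often enough, so eventually N_n only depends on A mod P; for
  such a proper numerator N_n has degree deg A + n(d - 1) and a leading coefficient of modulus
  at least n! |lc A|.

  Near a pole z_a the n-th derivative of Q is dominated by that of the top term of the principal
  part at z_a, because the Cauchy estimates for the remainder decay geometrically relative to it.
  This holds uniformly on the part of the unit disc closest to z_a, which by the Voronoi
  hypothesis stays strictly closer to z_a than to any other pole. Hence for large n all zeros of
  R_n lie outside the unit disc and |z_(K,n)| >= 1. Conversely |z_(K,n)| is at most the product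
  of all root moduli, |N_n(0)| / |lc N_n|; as no pole lies in the open unit disc, the Cauchy
  estimate for Q^(n)(0) on the disc of radius 1/2 bounds this by beta alpha^n. Since m_n >= n,
  both claims follow.
\<close>

section \<open>The numerators of the derivatives\<close>

definition logderiv_num :: "nat \<Rightarrow> (nat \<Rightarrow> complex) \<Rightarrow> (nat \<Rightarrow> nat) \<Rightarrow> nat \<Rightarrow> complex poly" where
  "logderiv_num d z r n = (\<Sum>i<d. smult (of_nat (r i + n)) (\<Prod>j\<in>{..<d}-{i}. [:-z j, 1:]))"

fun deriv_num :: "complex poly \<Rightarrow> nat \<Rightarrow> (nat \<Rightarrow> complex) \<Rightarrow> (nat \<Rightarrow> nat) \<Rightarrow> nat \<Rightarrow> complex poly" where
  "deriv_num A d z r 0 = A"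
| "deriv_num A d z r (Suc n) =
     polP0 d z * pderiv (deriv_num A d z r n) - logderiv_num d z r n * deriv_num A d z r n"

lemma pderiv_prod_linear_powers:
  fixes c :: "'i \<Rightarrow> complex"
  assumes "finite I" "\<forall>i\<in>I. s i \<ge> 1"
  shows "(\<Prod>i\<in>I. [:-c i, 1:]) * pderiv (\<Prod>i\<in>I. [:-c i, 1:] ^ s i)
       = (\<Sum>i\<in>I. smult (of_nat (s i)) (\<Prod>j\<in>I-{i}. [:-c j, 1:])) * (\<Prod>i\<in>I. [:-c i, 1:] ^ s i)"
proof -
  have "(\<Prod>i\<in>I. [:-c i, 1:]) * pderiv (\<Prod>i\<in>I. [:-c i, 1:] ^ s i)
     = (\<Sum>a\<in>I. (\<Prod>i\<in>I. [:-c i, 1:]) * ((\<Prod>i\<in>I-{a}. [:-c i, 1:] ^ s i) * pderiv ([:-c a, 1:] ^ s a)))"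
    by (simp add: pderiv_prod sum_distrib_left)
  also have "\<dots> = (\<Sum>a\<in>I. smult (of_nat (s a)) (\<Prod>j\<in>I-{a}. [:-c j, 1:]) * (\<Prod>i\<in>I. [:-c i, 1:] ^ s i))"
  proof (rule sum.cong[OF refl])
    fix a assume a: "a \<in> I"
    have e1: "(\<Prod>i\<in>I. [:-c i, 1:]) = [:-c a, 1:] * (\<Prod>i\<in>I-{a}. [:-c i, 1:])"
      using a assms(1) by (simp add: prod.remove)
    have e2: "(\<Prod>i\<in>I. [:-c i, 1:] ^ s i) = [:-c a, 1:] ^ s a * (\<Prod>i\<in>I-{a}. [:-c i, 1:] ^ s i)"
      using a assms(1) by (simp add: prod.remove)
    have e3: "[:-c a, 1:] * [:-c a, 1:] ^ (s a - 1) = [:-c a, 1:] ^ s a"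
      using assms(2) a by (cases "s a") auto
    have pd: "pderiv ([:-c a, 1:] ^ s a) = smult (of_nat (s a)) ([:-c a, 1:] ^ (s a - 1))"
      by (simp add: pderiv_power pderiv_pCons)
    show "(\<Prod>i\<in>I. [:-c i, 1:]) * ((\<Prod>i\<in>I-{a}. [:-c i, 1:] ^ s i) * pderiv ([:-c a, 1:] ^ s a))
      = smult (of_nat (s a)) (\<Prod>j\<in>I-{a}. [:-c j, 1:]) * (\<Prod>i\<in>I. [:-c i, 1:] ^ s i)"
      unfolding e1 e2 pd by (simp only: e3[symmetric] mult_smult_left mult_smult_right mult_ac)
  qed
  also have "\<dots> = (\<Sum>i\<in>I. smult (of_nat (s i)) (\<Prod>j\<in>I-{i}. [:-c j, 1:])) * (\<Prod>i\<in>I. [:-c i, 1:] ^ s i)"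
    by (simp add: sum_distrib_right)
  finally show ?thesis .
qed

lemma polP_mult_polP0_power: "polP d z r * polP0 d z ^ n = (\<Prod>i<d. [:-z i, 1:] ^ (r i + n))"
  by (simp add: polP_def polP0_def prod_power_distrib prod.distrib power_add)

lemma polP0_mult_pderiv_denom:
  assumes "\<forall>i<d. r i \<ge> 1"
  shows "polP0 d z * pderiv (polP d z r * polP0 d z ^ n)
       = logderiv_num d z r n * (polP d z r * polP0 d z ^ n)"
proof -
  have fin: "finite {..<d}" and pos: "\<forall>i\<in>{..<d}. r i + n \<ge> 1" using assms by auto
  have "polP0 d z * pderiv (\<Prod>i<d. [:-z i, 1:] ^ (r i + n))
      = logderiv_num d z r n * (\<Prod>i<d. [:-z i, 1:] ^ (r i + n))"
    unfolding logderiv_num_def polP0_def by (rule pderiv_prod_linear_powers[OF fin pos])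
  then show ?thesis by (simp only: polP_mult_polP0_power)
qed

lemma quotient_rule_cancel:
  fixes a M c e p0 E :: complex
  assumes "M \<noteq> 0" "p0 \<noteq> 0" "p0 * e = E * M"
  shows "(a * M - c * e) / (M * M) = (p0 * a - E * c) / (M * p0)"
proof -
  have "(a * M - c * e) * (M * p0) = (p0 * a - E * c) * (M * M)" using assms(3) by algebra
  then show ?thesis using assms(1,2) by (simp add: frac_eq_eq)
qed

definition nonpoles :: "nat \<Rightarrow> (nat \<Rightarrow> complex) \<Rightarrow> complex set" where
  "nonpoles d z = - z ` {..<d}"

lemma in_nonpoles_iff: "w \<in> nonpoles d z \<longleftrightarrow> (\<forall>i<d. w \<noteq> z i)"
  by (auto simp: nonpoles_def)

lemma open_nonpoles: "open (nonpoles d z)"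
  by (simp add: nonpoles_def open_Compl finite_imp_closed)

lemma infinite_nonpoles: "infinite (nonpoles d z)"
  unfolding nonpoles_def Compl_eq_Diff_UNIV by (intro Diff_infinite_finite infinite_UNIV_char_0) auto

lemma poly_polP: "poly (polP d z r) w = (\<Prod>i<d. (w - z i) ^ r i)"
  by (simp add: polP_def poly_prod)

lemma poly_polP0: "poly (polP0 d z) w = (\<Prod>i<d. w - z i)"
  by (simp add: polP0_def poly_prod)

lemma polP_nonzero_iff:
  assumes "\<forall>i<d. r i \<ge> 1"
  shows "poly (polP d z r) w \<noteq> 0 \<longleftrightarrow> w \<in> nonpoles d z"
  using assms by (auto simp: poly_polP in_nonpoles_iff prod_zero_iff)

lemma polP0_nonzero_iff: "poly (polP0 d z) w \<noteq> 0 \<longleftrightarrow> w \<in> nonpoles d z"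
  by (auto simp: poly_polP0 in_nonpoles_iff prod_zero_iff)

lemma higher_deriv_ratQ:
  assumes r1: "\<forall>i<d. r i \<ge> 1" and "w \<in> nonpoles d z"
  shows "(deriv ^^ n) (ratQ A d z r) w
       = poly (deriv_num A d z r n) w / poly (polP d z r * polP0 d z ^ n) w"
  using assms(2)
proof (induction n arbitrary: w)
  case 0
  then show ?case by (simp add: ratQ_def)
next
  case (Suc n)
  let ?M = "polP d z r * polP0 d z ^ n"
  let ?N = "deriv_num A d z r n"
  let ?E = "logderiv_num d z r n"
  have ev: "eventually (\<lambda>v. (deriv ^^ n) (ratQ A d z r) v = poly ?N v / poly ?M v) (nhds w)"
    using eventually_nhds_in_open[OF open_nonpoles Suc.prems] by (rule eventually_mono) (rule Suc.IH)
  have P0nz: "poly (polP0 d z) w \<noteq> 0"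
    using Suc.prems polP0_nonzero_iff by blast
  have Mnz: "poly ?M w \<noteq> 0"
    using Suc.prems P0nz polP_nonzero_iff[OF r1] by (simp add: poly_mult)
  have cancel: "poly (polP0 d z) w * poly (pderiv ?M) w = poly ?E w * poly ?M w"
    using polP0_mult_pderiv_denom[OF r1, of z n] by (metis poly_mult)
  have "deriv (\<lambda>v. poly ?N v / poly ?M v) w
      = (poly (pderiv ?N) w * poly ?M w - poly ?N w * poly (pderiv ?M) w) / (poly ?M w * poly ?M w)"
    by (rule DERIV_imp_deriv[OF DERIV_divide[OF poly_DERIV poly_DERIV Mnz]])
  then have "(deriv ^^ Suc n) (ratQ A d z r) w
      = (poly (pderiv ?N) w * poly ?M w - poly ?N w * poly (pderiv ?M) w) / (poly ?M w * poly ?M w)"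
    using deriv_cong_ev[OF ev refl] by simp
  also have "\<dots> = (poly (polP0 d z) w * poly (pderiv ?N) w - poly ?E w * poly ?N w)
      / (poly ?M w * poly (polP0 d z) w)"
    by (rule quotient_rule_cancel[OF Mnz P0nz cancel])
  also have "\<dots> = poly (deriv_num A d z r (Suc n)) w / poly (polP d z r * polP0 d z ^ Suc n) w"
    by (simp add: poly_mult mult_ac)
  finally show ?case .
qed

lemma numQ_eq_deriv_num:
  assumes r1: "\<forall>i<d. r i \<ge> 1"
  shows "numQ A d z r n = deriv_num A d z r n"
proof -
  let ?den = "\<lambda>w. poly (polP d z r) w * poly (polP0 d z) w ^ n"
  let ?spec = "\<lambda>p. \<forall>w. poly (polP d z r) w \<noteq> 0 \<longrightarrow> (deriv ^^ n) (ratQ A d z r) w = poly p w / ?den w"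
  have spec: "?spec (deriv_num A d z r n)"
    using higher_deriv_ratQ[OF r1] polP_nonzero_iff[OF r1] by (simp add: poly_mult poly_power)
  have "p = deriv_num A d z r n" if p: "?spec p" for p
  proof -
    have "nonpoles d z \<subseteq> {w. poly (p - deriv_num A d z r n) w = 0}"
    proof
      fix w assume w: "w \<in> nonpoles d z"
      then have "poly (polP d z r) w \<noteq> 0" "poly (polP0 d z) w \<noteq> 0"
        using polP_nonzero_iff[OF r1] polP0_nonzero_iff by blast+
      then show "w \<in> {w. poly (p - deriv_num A d z r n) w = 0}"
        using p[rule_format, of w] spec[rule_format, of w] by simp
    qed
    then have "infinite {w. poly (p - deriv_num A d z r n) w = 0}"
      using infinite_nonpoles finite_subset by blast
    then show ?thesis using poly_roots_finite[of "p - deriv_num A d z r n"] by auto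
  qed
  with spec show ?thesis unfolding numQ_def by (rule the_equality)
qed

section \<open>Reduction to the proper part\<close>

lemma deriv_num_add: "deriv_num (A1 + A2) d z r n = deriv_num A1 d z r n + deriv_num A2 d z r n"
  by (induction n) (simp_all add: pderiv_add algebra_simps)

lemma deriv_num_mult_polP:
  assumes "\<forall>i<d. r i \<ge> 1"
  shows "deriv_num (S * polP d z r) d z r n = (pderiv ^^ n) S * (polP d z r * polP0 d z ^ n)"
proof (induction n)
  case 0
  then show ?case by simp
next
  case (Suc n)
  let ?M = "polP d z r * polP0 d z ^ n"
  let ?S = "(pderiv ^^ n) S"
  have "deriv_num (S * polP d z r) d z r (Suc n)
      = polP0 d z * pderiv ?S * ?M + ?S * (polP0 d z * pderiv ?M) - logderiv_num d z r n * (?S * ?M)"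
    using Suc by (simp add: pderiv_mult algebra_simps)
  also have "\<dots> = (pderiv ^^ Suc n) S * (polP d z r * polP0 d z ^ Suc n)"
    unfolding polP0_mult_pderiv_denom[OF assms] by (simp add: algebra_simps)
  finally show ?case .
qed

lemma higher_pderiv_eq_0:
  fixes p :: "'a::{comm_semiring_1,semiring_no_zero_divisors,semiring_char_0} poly"
  assumes "degree p < n"
  shows "(pderiv ^^ n) p = 0"
  using assms by (intro poly_eqI) (simp add: coeff_higher_pderiv coeff_eq_0)

lemma deriv_num_mod:
  assumes "\<forall>i<d. r i \<ge> 1" "degree (A div polP d z r) < n"
  shows "deriv_num A d z r n = deriv_num (A mod polP d z r) d z r n"
proof -
  have "deriv_num A d z r n
      = deriv_num ((A div polP d z r) * polP d z r) d z r n + deriv_num (A mod polP d z r) d z r n"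
    by (metis deriv_num_add div_mult_mod_eq)
  then show ?thesis
    using deriv_num_mult_polP[OF assms(1)] higher_pderiv_eq_0[OF assms(2)] by simp
qed

lemma eventually_numQ_eq_deriv_num_mod:
  assumes "\<forall>i<d. r i \<ge> 1"
  shows "eventually (\<lambda>n. numQ A d z r n = deriv_num (A mod polP d z r) d z r n) sequentially"
proof (rule eventually_mono[OF eventually_gt_at_top[of "degree (A div polP d z r)"]])
  fix n assume "degree (A div polP d z r) < n"
  then show "numQ A d z r n = deriv_num (A mod polP d z r) d z r n"
    unfolding numQ_eq_deriv_num[OF assms] by (rule deriv_num_mod[OF assms])
qed

lemma polP_neq_0: "polP d z r \<noteq> 0"
  by (simp add: polP_def prod_zero_iff)

lemma poly_mod_polP_at_pole:
  assumes "\<forall>i<d. r i \<ge> 1" "i < d"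
  shows "poly (A mod polP d z r) (z i) = poly A (z i)"
proof -
  have "poly (polP d z r) (z i) = 0"
    using polP_nonzero_iff[OF assms(1)] assms(2) by (auto simp: in_nonpoles_iff)
  then show ?thesis
    by (metis add_0 div_mult_mod_eq mult_zero_right poly_add poly_mult)
qed

lemma poly_logderiv_num_at_pole:
  assumes "a < d"
  shows "poly (logderiv_num d z r n) (z a) = of_nat (r a + n) * (\<Prod>j\<in>{..<d}-{a}. z a - z j)"
proof -
  have "poly (logderiv_num d z r n) (z a) = (\<Sum>i<d. of_nat (r i + n) * (\<Prod>j\<in>{..<d}-{i}. z a - z j))"
    by (simp add: logderiv_num_def poly_sum poly_prod)
  also have "\<dots> = of_nat (r a + n) * (\<Prod>j\<in>{..<d}-{a}. z a - z j)
       + (\<Sum>i\<in>{..<d}-{a}. of_nat (r i + n) * (\<Prod>j\<in>{..<d}-{i}. z a - z j))"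
    using assms by (simp add: sum.remove)
  also have "(\<Sum>i\<in>{..<d}-{a}. of_nat (r i + n) * (\<Prod>j\<in>{..<d}-{i}. z a - z j)) = 0"
    using assms by (intro sum.neutral) (auto simp: prod_zero_iff)
  finally show ?thesis by simp
qed

lemma deriv_num_at_pole_nonzero:
  assumes "a < d" "inj_on z {..<d}" "poly A (z a) \<noteq> 0" "r a \<ge> 1"
  shows "poly (deriv_num A d z r n) (z a) \<noteq> 0"
proof (induction n)
  case 0
  then show ?case using assms by simp
next
  case (Suc n)
  have "poly (polP0 d z) (z a) = 0"
    using assms(1) polP0_nonzero_iff in_nonpoles_iff by blast
  then have eq: "poly (deriv_num A d z r (Suc n)) (z a)
      = - poly (logderiv_num d z r n) (z a) * poly (deriv_num A d z r n) (z a)"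
    by simp
  have "(\<Prod>j\<in>{..<d}-{a}. z a - z j) \<noteq> 0"
    using assms(1,2) by (auto simp: prod_zero_iff inj_on_eq_iff)
  moreover have "(of_nat (r a + n) :: complex) \<noteq> 0"
    using assms(4) by (simp only: of_nat_eq_0_iff)
  ultimately have "poly (logderiv_num d z r n) (z a) \<noteq> 0"
    unfolding poly_logderiv_num_at_pole[OF assms(1)] by simp
  then show ?case unfolding eq using Suc by simp
qed

section \<open>Degree and leading coefficient\<close>

lemma coeff_mult_at_degree_bounds:
  fixes p q :: "'a::comm_semiring_1 poly"
  assumes "degree p \<le> a" "degree q \<le> b"
  shows "coeff (p * q) (a + b) = coeff p a * coeff q b"
proof -
  have "coeff (p * q) (a + b) = (\<Sum>i\<le>a+b. coeff p i * coeff q (a + b - i))"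
    by (simp add: coeff_mult)
  also have "\<dots> = coeff p a * coeff q (a + b - a) + (\<Sum>i\<in>{..a+b}-{a}. coeff p i * coeff q (a + b - i))"
    by (subst sum.remove[of _ a]) auto
  also have "(\<Sum>i\<in>{..a+b}-{a}. coeff p i * coeff q (a + b - i)) = 0"
  proof (intro sum.neutral ballI)
    fix i assume i: "i \<in> {..a+b}-{a}"
    show "coeff p i * coeff q (a + b - i) = 0"
    proof (cases "i > a")
      case True
      then show ?thesis using assms(1) by (simp add: coeff_eq_0)
    next
      case False
      then have "a + b - i > b" using i by auto
      then show ?thesis using assms(2) by (simp add: coeff_eq_0)
    qed
  qed
  finally show ?thesis by simp
qed

lemma degree_polP: "degree (polP d z r) = (\<Sum>i<d. r i)"
  by (simp add: polP_def degree_prod_sum_eq degree_power_eq)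

lemma degree_polP0: "degree (polP0 d z) = d"
  by (simp add: polP0_def degree_prod_sum_eq)

lemma coeff_polP0_top: "coeff (polP0 d z) d = 1"
proof -
  have "lead_coeff (polP0 d z) = 1"
    by (simp add: polP0_def lead_coeff_prod)
  then show ?thesis by (simp add: degree_polP0)
qed

lemma
  shows degree_logderiv_num_le: "degree (logderiv_num d z r n) \<le> d - 1"
    and coeff_logderiv_num_top: "coeff (logderiv_num d z r n) (d - 1) = of_nat ((\<Sum>i<d. r i) + d * n)"
proof -
  have deg: "degree (\<Prod>j\<in>{..<d}-{i}. [:-z j, 1:]) = d - 1" if "i < d" for i
    using that by (simp add: degree_prod_sum_eq)
  have top: "coeff (\<Prod>j\<in>{..<d}-{i}. [:-z j, 1:]) (d - 1) = 1" if "i < d" for i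
    using deg[OF that] lead_coeff_prod[of "\<lambda>j. [:-z j, 1:]" "{..<d}-{i}"] by simp
  have "coeff (logderiv_num d z r n) k = 0" if "k > d - 1" for k
    unfolding logderiv_num_def using deg that by (simp add: coeff_sum coeff_eq_0)
  then show "degree (logderiv_num d z r n) \<le> d - 1"
    by (simp add: degree_le)
  have "coeff (logderiv_num d z r n) (d - 1) = (\<Sum>i<d. of_nat (r i + n))"
    unfolding logderiv_num_def coeff_sum
    by (intro sum.cong refl) (simp only: coeff_smult top lessThan_iff mult_1_right)
  also have "\<dots> = of_nat ((\<Sum>i<d. r i) + d * n)"
    by (simp add: sum.distrib)
  finally show "coeff (logderiv_num d z r n) (d - 1) = of_nat ((\<Sum>i<d. r i) + d * n)" .
qed

lemma degree_deriv_num_Suc_le: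
  assumes "d \<ge> 1"
  shows "degree (deriv_num A d z r (Suc k)) \<le> degree (deriv_num A d z r k) + (d - 1)"
proof -
  let ?N = "deriv_num A d z r k"
  have "degree (polP0 d z * pderiv ?N) \<le> degree ?N + (d - 1)"
  proof (cases "degree ?N = 0")
    case True
    then show ?thesis by (simp add: pderiv_eq_0_iff[THEN iffD2])
  next
    case False
    then show ?thesis
      using degree_mult_le[of "polP0 d z" "pderiv ?N"] assms by (simp add: degree_polP0 degree_pderiv)
  qed
  moreover have "degree (logderiv_num d z r k * ?N) \<le> degree ?N + (d - 1)"
    using degree_mult_le[of "logderiv_num d z r k" ?N] degree_logderiv_num_le[of d z r k] by simp
  ultimately show ?thesis by (simp add: degree_diff_le)
qed

lemma coeff_deriv_num_Suc:
  assumes "d \<ge> 1"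
  shows "coeff (deriv_num A d z r (Suc k)) (degree (deriv_num A d z r k) + (d - 1))
       = (of_nat (degree (deriv_num A d z r k)) - of_nat ((\<Sum>i<d. r i) + d * k))
         * lead_coeff (deriv_num A d z r k)"
proof -
  let ?N = "deriv_num A d z r k"
  let ?m = "degree ?N"
  have c1: "coeff (polP0 d z * pderiv ?N) (?m + (d - 1)) = of_nat ?m * lead_coeff ?N"
  proof (cases "?m = 0")
    case True
    then show ?thesis by (simp add: pderiv_eq_0_iff[THEN iffD2])
  next
    case False
    have "coeff (polP0 d z * pderiv ?N) (d + (?m - 1)) = coeff (polP0 d z) d * coeff (pderiv ?N) (?m - 1)"
      by (rule coeff_mult_at_degree_bounds) (simp_all add: degree_polP0 degree_pderiv)
    moreover have "?m + (d - 1) = d + (?m - 1)"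
      using False assms by simp
    ultimately show ?thesis
      using False by (simp add: coeff_pderiv coeff_polP0_top)
  qed
  have "coeff (logderiv_num d z r k * ?N) ((d - 1) + ?m) = coeff (logderiv_num d z r k) (d - 1) * lead_coeff ?N"
    by (rule coeff_mult_at_degree_bounds[OF degree_logderiv_num_le order.refl])
  then have c2: "coeff (logderiv_num d z r k * ?N) (?m + (d - 1))
      = of_nat ((\<Sum>i<d. r i) + d * k) * lead_coeff ?N"
    by (simp only: add.commute[of ?m] coeff_logderiv_num_top)
  show ?thesis
    by (simp only: deriv_num.simps coeff_diff c1 c2) (simp add: algebra_simps)
qed

lemma deriv_num_Suc_degree_lead_coeff:
  assumes d1: "d \<ge> 1" and lc: "lead_coeff (deriv_num A d z r k) \<noteq> 0"
    and less: "degree (deriv_num A d z r k) < (\<Sum>i<d. r i) + d * k"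
  shows "degree (deriv_num A d z r (Suc k)) = degree (deriv_num A d z r k) + (d - 1)"
    and "norm (lead_coeff (deriv_num A d z r (Suc k)))
       = real ((\<Sum>i<d. r i) + d * k - degree (deriv_num A d z r k)) * norm (lead_coeff (deriv_num A d z r k))"
proof -
  let ?N = "deriv_num A d z r k"
  let ?m = "degree ?N"
  let ?e = "(\<Sum>i<d. r i) + d * k - ?m"
  have top: "coeff (deriv_num A d z r (Suc k)) (?m + (d - 1)) = - of_nat ?e * lead_coeff ?N"
    using coeff_deriv_num_Suc[OF d1, of A z r k] less by (simp add: of_nat_diff)
  have "?e \<noteq> 0" using less by linarith
  then have "(of_nat ?e :: complex) \<noteq> 0" by (metis of_nat_eq_0_iff)
  then have "coeff (deriv_num A d z r (Suc k)) (?m + (d - 1)) \<noteq> 0"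
    unfolding top using lc by (simp only: mult_eq_0_iff neg_equal_0_iff_equal) blast
  then have "?m + (d - 1) \<le> degree (deriv_num A d z r (Suc k))"
    by (rule le_degree)
  with degree_deriv_num_Suc_le[OF d1, of A z r k]
  show deg: "degree (deriv_num A d z r (Suc k)) = ?m + (d - 1)"
    by (rule antisym)
  show "norm (lead_coeff (deriv_num A d z r (Suc k))) = real ?e * norm (lead_coeff ?N)"
    unfolding deg top by (simp add: norm_mult)
qed

lemma deriv_num_degree_lead_coeff:
  assumes d1: "d \<ge> 1" and A0: "A \<noteq> 0" and dA: "degree A < degree (polP d z r)"
  shows "degree (deriv_num A d z r n) = degree A + n * (d - 1) \<and>
         norm (lead_coeff A) * fact n \<le> norm (lead_coeff (deriv_num A d z r n))"
proof (induction n)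
  case 0
  show ?case by simp
next
  case (Suc k)
  let ?N = "deriv_num A d z r k"
  let ?e = "(\<Sum>i<d. r i) + d * k - degree ?N"
  have m: "degree ?N = degree A + k * (d - 1)"
    and lb: "norm (lead_coeff A) * fact k \<le> norm (lead_coeff ?N)"
    using Suc.IH by auto
  have "0 < norm (lead_coeff A) * fact k" using A0 by simp
  then have "0 < norm (lead_coeff ?N)" using lb by linarith
  then have lc: "lead_coeff ?N \<noteq> 0" by auto
  have "k * (d - 1) + k = d * k"
    using d1 by (cases d) (auto simp: algebra_simps)
  then have e: "k + 1 \<le> ?e" "degree ?N < (\<Sum>i<d. r i) + d * k"
    using m dA by (simp_all add: degree_polP)
  note step = deriv_num_Suc_degree_lead_coeff[OF d1 lc e(2)]
  have "norm (lead_coeff A) * fact (Suc k) = real (k + 1) * (norm (lead_coeff A) * fact k)"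
    by (simp add: algebra_simps)
  also have "\<dots> \<le> real ?e * norm (lead_coeff ?N)"
  proof (rule mult_mono[OF _ lb])
    show "real (k + 1) \<le> real ?e" using e(1) by (simp only: of_nat_le_iff)
  qed simp_all
  also have "\<dots> = norm (lead_coeff (deriv_num A d z r (Suc k)))"
    by (rule step(2)[symmetric])
  finally have "norm (lead_coeff A) * fact (Suc k) \<le> norm (lead_coeff (deriv_num A d z r (Suc k)))" .
  moreover have "degree (deriv_num A d z r (Suc k)) = degree A + Suc k * (d - 1)"
    using step(1) m by simp
  ultimately show ?case by blast
qed

section \<open>Products of zeros\<close>

lemma zprod_nonneg: "zprod p K \<ge> 0"
  unfolding zprod_def by (simp add: prod_nonneg)

lemma one_le_zprod:
  assumes "\<forall>w. poly p w = 0 \<longrightarrow> cmod w \<ge> 1"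
  shows "zprod p K \<ge> 1"
  unfolding zprod_def using assms by (intro prod_ge_1) (auto intro: one_le_power)

lemma zprod_smult:
  fixes p :: "complex poly"
  assumes "c \<noteq> 0"
  shows "zprod (smult c p) K = zprod p K"
  unfolding zprod_def using assms by (simp add: order_smult)

lemma
  shows zprod_polR: "zprod (polR A d z r n) K = zprod (numQ A d z r n) K"
    and degree_polR: "degree (polR A d z r n) = degree (numQ A d z r n)"
  unfolding polR_def by (cases "numQ A d z r n = 0"; simp add: zprod_smult)+

lemma zprod_UNIV:
  fixes p :: "complex poly"
  assumes "p \<noteq> 0"
  shows "zprod p UNIV = cmod (poly p 0) / cmod (lead_coeff p)"
proof -
  have "poly p 0 = poly (smult (lead_coeff p) (\<Prod>w|poly p w = 0. [:-w, 1:] ^ order w p)) 0"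
    by (subst complex_poly_decompose) simp
  also have "\<dots> = lead_coeff p * (\<Prod>w|poly p w = 0. (- w) ^ order w p)"
    by (simp add: poly_prod)
  finally have "cmod (poly p 0) = cmod (lead_coeff p) * zprod p UNIV"
    by (simp add: zprod_def norm_mult prod_norm[symmetric] norm_power)
  then show ?thesis using assms by simp
qed

lemma zprod_le_zprod_UNIV:
  fixes p :: "complex poly"
  assumes "p \<noteq> 0" "\<forall>w. poly p w = 0 \<longrightarrow> cmod w \<ge> 1"
  shows "zprod p K \<le> zprod p UNIV"
proof -
  have fin: "finite {w. poly p w = 0}" using poly_roots_finite[OF assms(1)] .
  have "zprod p K * zprod p (UNIV - K)
      = (\<Prod>w\<in>{w\<in>K. poly p w = 0} \<union> {w\<in>UNIV - K. poly p w = 0}. cmod w ^ order w p)"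
    unfolding zprod_def by (rule prod.union_disjoint[symmetric]) (auto intro: finite_subset[OF _ fin])
  also have "\<dots> = zprod p UNIV"
    unfolding zprod_def by (rule prod.cong) auto
  finally have "zprod p K * zprod p (UNIV - K) = zprod p UNIV" .
  moreover have "zprod p K * 1 \<le> zprod p K * zprod p (UNIV - K)"
    using one_le_zprod[OF assms(2)] zprod_nonneg by (rule mult_left_mono)
  ultimately show ?thesis by simp
qed

lemma zprod_bounds_of_no_zeros_in_disc:
  fixes p :: "complex poly"
  assumes "\<forall>w\<in>cball 0 1. poly p w \<noteq> 0"
  shows "1 \<le> zprod p K" and "zprod p K \<le> zprod p UNIV"
proof -
  have roots: "\<forall>w. poly p w = 0 \<longrightarrow> 1 \<le> cmod w"
    using assms by (auto simp: not_le[symmetric])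
  moreover have "poly p 0 \<noteq> 0"
    using assms by simp
  then have "p \<noteq> 0" by auto
  ultimately show "1 \<le> zprod p K" "zprod p K \<le> zprod p UNIV"
    by (simp_all add: one_le_zprod zprod_le_zprod_UNIV)
qed

section \<open>Dominance of the principal part near a pole\<close>

definition principal_part :: "(nat \<Rightarrow> complex) \<Rightarrow> nat \<Rightarrow> complex \<Rightarrow> complex \<Rightarrow> complex" where
  "principal_part t k \<rho> v = (\<Sum>j<k. t j / (v - \<rho>) ^ (k - j))"

lemma holomorphic_principal_part: "\<rho> \<notin> S \<Longrightarrow> principal_part t k \<rho> holomorphic_on S"
  unfolding principal_part_def by (intro holomorphic_intros) auto

lemma has_field_derivative_divide_power:
  fixes c \<rho> v :: complex
  assumes "v \<noteq> \<rho>"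
  shows "((\<lambda>v. c / (v - \<rho>) ^ M) has_field_derivative (- c * of_nat M / (v - \<rho>) ^ (M + 1))) (at v)"
proof -
  have quotient: "(0 * X ^ M - c * (of_nat M * ((1 - 0) * X ^ (M - Suc 0)))) / (X ^ M * X ^ M)
      = - c * of_nat M / X ^ (M + 1)" if "X \<noteq> 0" for X :: complex
    using that by (cases M) (simp_all add: field_simps power_add)
  have lin: "((\<lambda>v. v - \<rho>) has_field_derivative (1 - 0)) (at v)"
    by (intro DERIV_diff DERIV_ident DERIV_const)
  have "(v - \<rho>) ^ M \<noteq> 0" using assms by simp
  from DERIV_divide[OF DERIV_const[of c] DERIV_power[OF lin, of M] this] show ?thesis
    by (rule DERIV_cong) (rule quotient, use assms in simp)
qed

lemma higher_deriv_principal_part: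
  assumes "v \<noteq> \<rho>"
  shows "(deriv ^^ n) (principal_part t k \<rho>) v
       = (\<Sum>j<k. t j * (-1) ^ n * of_nat (pochhammer (k - j) n) / (v - \<rho>) ^ (k - j + n))"
  using assms
proof (induction n arbitrary: v)
  case 0
  then show ?case by (simp add: principal_part_def)
next
  case (Suc n)
  let ?D = "\<lambda>x. \<Sum>j<k. t j * (-1) ^ n * of_nat (pochhammer (k - j) n) / (x - \<rho>) ^ (k - j + n)"
  have ev: "eventually (\<lambda>x. (deriv ^^ n) (principal_part t k \<rho>) x = ?D x) (nhds v)"
    using t1_space_nhds[OF Suc.prems] by (rule eventually_mono) (rule Suc.IH)
  have "(?D has_field_derivative (\<Sum>j<k. - (t j * (-1) ^ n * of_nat (pochhammer (k - j) n))
      * of_nat (k - j + n) / (v - \<rho>) ^ (k - j + n + 1))) (at v)"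
    by (intro DERIV_sum has_field_derivative_divide_power Suc.prems)
  then have "deriv ?D v = (\<Sum>j<k. - (t j * (-1) ^ n * of_nat (pochhammer (k - j) n))
      * of_nat (k - j + n) / (v - \<rho>) ^ (k - j + n + 1))"
    by (rule DERIV_imp_deriv)
  also have "\<dots> = (\<Sum>j<k. t j * (-1) ^ Suc n * of_nat (pochhammer (k - j) (Suc n)) / (v - \<rho>) ^ (k - j + Suc n))"
  proof (intro sum.cong refl)
    fix j
    have poch: "pochhammer (k - j) (Suc n) = pochhammer (k - j) n * (k - j + n)"
      by (simp add: pochhammer_Suc)
    have shift: "k - j + Suc n = k - j + n + 1"
      by simp
    have "- (a * (-1) ^ n * of_nat P) * of_nat m / X ^ (m + 1)
        = a * (-1) ^ Suc n * of_nat (P * m) / X ^ (m + 1)" for a X :: complex and P m :: nat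
      by simp
    then show "- (t j * (-1) ^ n * of_nat (pochhammer (k - j) n)) * of_nat (k - j + n) / (v - \<rho>) ^ (k - j + n + 1)
        = t j * (-1) ^ Suc n * of_nat (pochhammer (k - j) (Suc n)) / (v - \<rho>) ^ (k - j + Suc n)"
      unfolding poch shift .
  qed
  finally show ?case using deriv_cong_ev[OF ev refl] by simp
qed

lemma pochhammer_mono_nat: "(a::nat) \<le> b \<Longrightarrow> pochhammer a n \<le> pochhammer b n"
  by (induction n) (auto simp: pochhammer_Suc intro: mult_le_mono)

lemma fact_le_pochhammer_nat: "(k::nat) \<ge> 1 \<Longrightarrow> fact n \<le> pochhammer k n"
  using pochhammer_mono_nat[of 1 k n] by (simp add: pochhammer_fact)

lemma pochhammer_pred_le:
  assumes "(k::nat) \<ge> 1"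
  shows "pochhammer (k - 1) n * (n + 1) \<le> k * pochhammer k n"
proof (cases "k = 1")
  case True
  then show ?thesis by (cases n) (auto simp: pochhammer_0_left)
next
  case False
  have "pochhammer (k - 1) n * (n + 1) \<le> pochhammer (k - 1) n * (k - 1 + n)"
    using False assms by (intro mult_le_mono2) simp
  also have "\<dots> = (k - 1) * pochhammer k n"
    using pochhammer_Suc[of "k - 1" n] pochhammer_rec[of "k - 1" n] assms by simp
  also have "\<dots> \<le> k * pochhammer k n"
    by simp
  finally show ?thesis .
qed

lemma norm_principal_tail_le:
  fixes X :: complex and t :: "nat \<Rightarrow> complex"
  assumes XL: "norm X \<le> L" and L: "L \<ge> 1"
  shows "norm (\<Sum>j\<in>{1..<k}. t j * (-1) ^ n * of_nat (pochhammer (k - j) n) * X ^ j)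
     \<le> (\<Sum>j\<in>{1..<k}. norm (t j)) * L ^ k * real (pochhammer (k - 1) n)"
proof -
  let ?a = "\<lambda>j. t j * (-1) ^ n * of_nat (pochhammer (k - j) n) * X ^ j"
  have "norm (\<Sum>j\<in>{1..<k}. ?a j) \<le> (\<Sum>j\<in>{1..<k}. norm (t j) * (L ^ k * real (pochhammer (k - 1) n)))"
  proof (rule order.trans[OF norm_sum sum_mono])
    fix j assume j: "j \<in> {1..<k}"
    have poch: "real (pochhammer (k - j) n) \<le> real (pochhammer (k - 1) n)"
      using j by (intro of_nat_mono pochhammer_mono_nat) auto
    have pow: "norm X ^ j \<le> L ^ k"
      using j L XL by (intro order.trans[OF power_mono power_increasing]) auto
    have "norm (?a j) = norm (t j) * (real (pochhammer (k - j) n) * norm X ^ j)"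
      by (simp add: norm_mult norm_power mult_ac)
    also have "\<dots> \<le> norm (t j) * (real (pochhammer (k - 1) n) * L ^ k)"
      using poch pow by (intro mult_left_mono mult_mono) auto
    finally show "norm (?a j) \<le> norm (t j) * (L ^ k * real (pochhammer (k - 1) n))"
      by (simp add: mult_ac)
  qed
  then show ?thesis
    by (simp add: sum_distrib_right mult.assoc)
qed

lemma norm_scaled_principal_part_deriv_ge:
  fixes X H :: complex and t :: "nat \<Rightarrow> complex"
  assumes X: "X \<noteq> 0" and k: "k \<ge> 1" and XL: "norm X \<le> L" and L: "L \<ge> 1"
    and H: "norm (X ^ (k + n) * H) \<le> E"
  shows "norm (X ^ (k + n) * ((\<Sum>j<k. t j * (-1) ^ n * of_nat (pochhammer (k - j) n) / X ^ (k - j + n)) + H))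
     \<ge> norm (t 0) * real (pochhammer k n)
        - (\<Sum>j\<in>{1..<k}. norm (t j)) * L ^ k * real (pochhammer (k - 1) n) - E"
proof -
  let ?a = "\<lambda>j. t j * (-1) ^ n * of_nat (pochhammer (k - j) n) * X ^ j"
  have "X ^ (k + n) * (\<Sum>j<k. t j * (-1) ^ n * of_nat (pochhammer (k - j) n) / X ^ (k - j + n))
      = (\<Sum>j<k. ?a j)"
    unfolding sum_distrib_left
  proof (rule sum.cong[OF refl])
    fix j assume "j \<in> {..<k}"
    then have "X ^ (k + n) = X ^ j * X ^ (k - j + n)" by (simp add: power_add[symmetric])
    then show "X ^ (k + n) * (t j * (-1) ^ n * of_nat (pochhammer (k - j) n) / X ^ (k - j + n)) = ?a j"
      using X by (simp add: field_simps)
  qed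
  also have "\<dots> = ?a 0 + (\<Sum>j\<in>{1..<k}. ?a j)"
  proof -
    have "{..<k} = insert 0 {1..<k}" using k by auto
    then show ?thesis by simp
  qed
  finally have eq: "X ^ (k + n) * ((\<Sum>j<k. t j * (-1) ^ n * of_nat (pochhammer (k - j) n) / X ^ (k - j + n)) + H)
      = ?a 0 + (\<Sum>j\<in>{1..<k}. ?a j) + X ^ (k + n) * H"
    by (simp add: distrib_left)
  have "norm (?a 0) = norm (t 0) * real (pochhammer k n)"
    by (simp add: norm_mult norm_power)
  moreover have "norm (a + b + c) \<ge> norm a - norm b - norm c" for a b c :: complex
    using norm_triangle_ineq4[of "a + b + c" c] norm_triangle_ineq4[of "a + b" b] by simp
  ultimately show ?thesis
    unfolding eq using H norm_principal_tail_le[OF XL L, of t n k] by (smt (verit))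
qed

lemma principal_term_dominates:
  fixes t0 S Lk M q :: real
  assumes k: "k \<ge> 1" and S: "S \<ge> 0" and Lk: "Lk \<ge> 0" and M: "M \<ge> 0" and q: "q \<ge> 0"
    and small: "S * Lk * real k / (real n + 1) + Lk * M * q ^ n < t0"
  shows "t0 * real (pochhammer k n) - S * Lk * real (pochhammer (k - 1) n) - Lk * fact n * M * q ^ n > 0"
proof -
  let ?P = "real (pochhammer k n)"
  have P: "?P > 0"
    using fact_le_pochhammer_nat[OF k, of n] by (metis fact_gt_zero of_nat_0_less_iff order_less_le_trans)
  have "real (pochhammer (k - 1) n * (n + 1)) \<le> real (k * pochhammer k n)"
    using pochhammer_pred_le[OF k, of n] by (simp only: of_nat_le_iff)
  then have "real (pochhammer (k - 1) n) * (real n + 1) \<le> real k * ?P"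
    by (simp add: algebra_simps)
  then have "real (pochhammer (k - 1) n) \<le> real k * ?P / (real n + 1)"
    by (simp add: field_simps)
  then have first: "S * Lk * real (pochhammer (k - 1) n) \<le> S * Lk * (real k * ?P / (real n + 1))"
    using S Lk by (intro mult_left_mono) simp_all
  have "fact n \<le> ?P"
    using fact_le_pochhammer_nat[OF k, of n] by (metis of_nat_fact of_nat_le_iff)
  then have second: "Lk * fact n * M * q ^ n \<le> Lk * ?P * M * q ^ n"
    using Lk M q by (intro mult_right_mono mult_left_mono) simp_all
  have "?P * (S * Lk * real k / (real n + 1) + Lk * M * q ^ n) < ?P * t0"
    using P small by simp
  with first second show ?thesis
    by (simp add: algebra_simps)
qed

lemma norm_scaled_higher_deriv_le:
  fixes h :: "complex \<Rightarrow> complex"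
  assumes \<epsilon>: "\<epsilon> > 0" and h: "h holomorphic_on Kc" and M: "\<forall>\<zeta>\<in>Kc. cmod (h \<zeta>) \<le> M"
    and w: "w \<noteq> \<rho>" "cmod (w - \<rho>) \<le> L" "cball w (cmod (w - \<rho>) + \<epsilon>) \<subseteq> Kc"
  shows "norm ((w - \<rho>) ^ (k + n) * (deriv ^^ n) h w) \<le> L ^ k * fact n * M * (L / (L + \<epsilon>)) ^ n"
proof -
  define u where "u = cmod (w - \<rho>)"
  define s where "s = u + \<epsilon>"
  have u0: "u > 0" using w(1) by (simp add: u_def)
  have s0: "s > 0" using u0 \<epsilon> by (simp add: s_def)
  have uL: "u \<le> L" using w(2) by (simp add: u_def)
  have cball_sub: "cball w s \<subseteq> Kc" using w(3) by (simp add: s_def u_def)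
  have "w \<in> Kc" using cball_sub s0 by auto
  then have M0: "M \<ge> 0" using M norm_ge_zero order.trans by blast
  have "norm ((deriv ^^ n) h w) \<le> fact n * M / s ^ n"
  proof (rule Cauchy_inequality)
    show "h holomorphic_on ball w s"
      by (rule holomorphic_on_subset[OF h]) (use ball_subset_cball cball_sub in blast)
    show "continuous_on (cball w s) h"
      using holomorphic_on_imp_continuous_on[OF h] cball_sub by (rule continuous_on_subset)
    show "cmod (h x) \<le> M" if "cmod (w - x) = s" for x
      using M cball_sub that by (auto simp: dist_norm)
  qed (rule s0)
  then have "norm ((w - \<rho>) ^ (k + n) * (deriv ^^ n) h w) \<le> u ^ (k + n) * (fact n * M / s ^ n)"
    unfolding norm_mult norm_power u_def[symmetric] by (rule mult_left_mono) (use u0 in simp)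
  also have "\<dots> = u ^ k * fact n * M * (u / s) ^ n"
    by (simp add: power_add power_divide field_simps)
  also have "\<dots> \<le> L ^ k * fact n * M * (L / (L + \<epsilon>)) ^ n"
  proof -
    have "u * \<epsilon> \<le> L * \<epsilon>" using uL \<epsilon> by simp
    then have "u * (L + \<epsilon>) \<le> L * s" by (simp add: s_def algebra_simps)
    moreover have "0 < L + \<epsilon>" using u0 uL \<epsilon> by simp
    ultimately have "u / s \<le> L / (L + \<epsilon>)" using s0 by (simp add: field_simps)
    then have "(u / s) ^ n \<le> (L / (L + \<epsilon>)) ^ n"
      using u0 s0 by (intro power_mono) simp_all
    moreover have "u ^ k \<le> L ^ k"
      using u0 uL by (intro power_mono) simp_all
    ultimately show ?thesis
      using M0 u0 s0 uL by (intro mult_mono) (auto intro!: mult_nonneg_nonneg)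
  qed
  finally show ?thesis .
qed

lemma higher_deriv_near_pole_lower_bound:
  fixes h :: "complex \<Rightarrow> complex" and t :: "nat \<Rightarrow> complex"
  assumes k: "k \<ge> 1" and \<epsilon>: "\<epsilon> > 0" and L: "L \<ge> 1"
    and h: "h holomorphic_on Kc" and M: "\<forall>\<zeta>\<in>Kc. cmod (h \<zeta>) \<le> M"
    and w: "w \<noteq> \<rho>" "cmod (w - \<rho>) \<le> L" "cball w (cmod (w - \<rho>) + \<epsilon>) \<subseteq> Kc"
  shows "norm ((w - \<rho>) ^ (k + n) * (deriv ^^ n) (\<lambda>v. principal_part t k \<rho> v + h v) w)
      \<ge> norm (t 0) * real (pochhammer k n)
        - (\<Sum>j\<in>{1..<k}. norm (t j)) * L ^ k * real (pochhammer (k - 1) n)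
        - L ^ k * fact n * M * (L / (L + \<epsilon>)) ^ n"
proof -
  have "(deriv ^^ n) (\<lambda>v. principal_part t k \<rho> v + h v) w
      = (deriv ^^ n) (principal_part t k \<rho>) w + (deriv ^^ n) h w"
  proof (rule higher_deriv_add)
    show "principal_part t k \<rho> holomorphic_on ball w (cmod (w - \<rho>) + \<epsilon>) - {\<rho>}"
      by (rule holomorphic_principal_part) simp
    show "h holomorphic_on ball w (cmod (w - \<rho>) + \<epsilon>) - {\<rho>}"
      by (rule holomorphic_on_subset[OF h]) (use ball_subset_cball w(3) in blast)
  qed (use \<epsilon> w(1) in \<open>simp_all add: open_delete add_nonneg_pos\<close>)
  then show ?thesis
    using norm_scaled_principal_part_deriv_ge[OF _ k w(2) L norm_scaled_higher_deriv_le[OF \<epsilon> h M w], of t] w(1)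
    by (simp add: higher_deriv_principal_part)
qed

lemma eventually_higher_deriv_principal_part_nonzero:
  fixes h :: "complex \<Rightarrow> complex" and t :: "nat \<Rightarrow> complex"
  assumes t0: "t 0 \<noteq> 0" and k: "k \<ge> 1" and \<epsilon>: "\<epsilon> > 0" and L: "L \<ge> 1"
    and h: "h holomorphic_on Kc" and "compact Kc"
    and D: "\<forall>w\<in>D. cmod (w - \<rho>) \<le> L \<and> cball w (cmod (w - \<rho>) + \<epsilon>) \<subseteq> Kc"
  shows "eventually (\<lambda>n. \<forall>w\<in>D - {\<rho>}. (deriv ^^ n) (\<lambda>v. principal_part t k \<rho> v + h v) w \<noteq> 0)
           sequentially"
proof -
  obtain M where M: "\<forall>\<zeta>\<in>Kc. cmod (h \<zeta>) \<le> M"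
    using compact_imp_bounded[OF compact_continuous_image[OF holomorphic_on_imp_continuous_on[OF h]]]
      \<open>compact Kc\<close> unfolding bounded_iff by auto
  define q where "q = L / (L + \<epsilon>)"
  define S where "S = (\<Sum>j\<in>{1..<k}. norm (t j))"
  have q: "0 \<le> q" "q < 1" using L \<epsilon> by (auto simp: q_def)
  have "(\<lambda>n. S * L ^ k * real k * inverse (real (Suc n)) + L ^ k * M * q ^ n)
      \<longlonglongrightarrow> S * L ^ k * real k * 0 + L ^ k * M * 0"
    by (intro tendsto_add tendsto_mult tendsto_const LIMSEQ_inverse_real_of_nat LIMSEQ_realpow_zero q)
  then have "(\<lambda>n. S * L ^ k * real k / (real n + 1) + L ^ k * M * q ^ n) \<longlonglongrightarrow> 0"
    by (simp add: divide_inverse add.commute)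
  moreover have "0 < norm (t 0)" using t0 by simp
  ultimately have "eventually (\<lambda>n. S * L ^ k * real k / (real n + 1) + L ^ k * M * q ^ n < norm (t 0))
      sequentially"
    by (rule order_tendstoD(2))
  then show ?thesis
  proof (rule eventually_mono, intro ballI)
    fix n w
    assume n: "S * L ^ k * real k / (real n + 1) + L ^ k * M * q ^ n < norm (t 0)"
      and w: "w \<in> D - {\<rho>}"
    have "w \<in> cball w (cmod (w - \<rho>) + \<epsilon>)" using \<epsilon> by simp
    then have "w \<in> Kc" using D w by blast
    then have "M \<ge> 0" using M norm_ge_zero order.trans by blast
    then have pos: "norm (t 0) * real (pochhammer k n) - S * L ^ k * real (pochhammer (k - 1) n)
        - L ^ k * fact n * M * q ^ n > 0"
      using L q n by (intro principal_term_dominates[OF k]) (simp_all add: S_def sum_nonneg)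
    have "w \<noteq> \<rho>" "cmod (w - \<rho>) \<le> L" "cball w (cmod (w - \<rho>) + \<epsilon>) \<subseteq> Kc"
      using D w by auto
    then have "norm ((w - \<rho>) ^ (k + n) * (deriv ^^ n) (\<lambda>v. principal_part t k \<rho> v + h v) w)
        \<ge> norm (t 0) * real (pochhammer k n) - S * L ^ k * real (pochhammer (k - 1) n)
          - L ^ k * fact n * M * q ^ n"
      unfolding S_def q_def by (rule higher_deriv_near_pole_lower_bound[OF k \<epsilon> L h M])
    with pos have "norm ((w - \<rho>) ^ (k + n) * (deriv ^^ n) (\<lambda>v. principal_part t k \<rho> v + h v) w) > 0"
      by linarith
    then show "(deriv ^^ n) (\<lambda>v. principal_part t k \<rho> v + h v) w \<noteq> 0"
      by auto
  qed
qed

lemma partial_fraction_split: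
  fixes G A :: "complex poly"
  assumes "poly G \<rho> \<noteq> 0"
  shows "\<exists>T B. degree T \<le> k - 1 \<and> A = T * G + [:-\<rho>, 1:] ^ k * B"
proof (induction k)
  case 0
  show ?case by (rule exI[of _ 0], rule exI[of _ A]) simp
next
  case (Suc k)
  then obtain T B where TB: "degree T \<le> k - 1" "A = T * G + [:-\<rho>, 1:] ^ k * B" by blast
  define c where "c = poly B \<rho> / poly G \<rho>"
  have "poly (B - smult c G) \<rho> = 0" using assms by (simp add: c_def)
  then obtain B' where B': "B - smult c G = [:-\<rho>, 1:] * B'"
    using poly_eq_0_iff_dvd by (blast elim: dvdE)
  have "degree (T + smult c ([:-\<rho>, 1:] ^ k)) \<le> k"
    using TB(1) degree_smult_le[of c "[:-\<rho>, 1:] ^ k"]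
    by (intro degree_add_le) (simp_all add: degree_power_eq)
  moreover have "A = (T + smult c ([:-\<rho>, 1:] ^ k)) * G + [:-\<rho>, 1:] ^ Suc k * B'"
  proof -
    have "[:-\<rho>, 1:] ^ Suc k * B' = [:-\<rho>, 1:] ^ k * (B - smult c G)"
      by (simp only: B' power_Suc2 mult.assoc)
    then show ?thesis using TB(2) by (simp add: algebra_simps)
  qed
  ultimately show ?case by auto
qed

lemma poly_divide_power_eq_principal_part:
  fixes T :: "complex poly"
  assumes "degree T < k" "v \<noteq> \<rho>"
  shows "poly T v / (v - \<rho>) ^ k = principal_part (coeff (pcompose T [:\<rho>, 1:])) k \<rho> v"
proof -
  let ?p = "pcompose T [:\<rho>, 1:]"
  have "poly T v = poly ?p (v - \<rho>)" by (simp add: poly_pcompose)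
  also have "\<dots> = (\<Sum>j\<le>degree ?p. coeff ?p j * (v - \<rho>) ^ j)" by (rule poly_altdef)
  also have "\<dots> = (\<Sum>j<k. coeff ?p j * (v - \<rho>) ^ j)"
  proof (rule sum.mono_neutral_right[symmetric])
    show "{..degree ?p} \<subseteq> {..<k}" using assms(1) by (auto simp: degree_pcompose)
  qed (auto simp: coeff_eq_0)
  finally have "poly T v / (v - \<rho>) ^ k = (\<Sum>j<k. coeff ?p j * (v - \<rho>) ^ j / (v - \<rho>) ^ k)"
    by (simp add: sum_divide_distrib)
  also have "\<dots> = principal_part (coeff ?p) k \<rho> v"
    unfolding principal_part_def
  proof (rule sum.cong[OF refl])
    fix j assume "j \<in> {..<k}"
    then have "(v - \<rho>) ^ k = (v - \<rho>) ^ j * (v - \<rho>) ^ (k - j)"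
      by (simp add: power_add[symmetric])
    then show "coeff ?p j * (v - \<rho>) ^ j / (v - \<rho>) ^ k = coeff ?p j / (v - \<rho>) ^ (k - j)"
      using assms(2) by simp
  qed
  finally show ?thesis .
qed

lemma ratQ_principal_part:
  assumes r1: "\<forall>i<d. r i \<ge> 1" and inj: "inj_on z {..<d}" and a: "a < d" and Aa: "poly A (z a) \<noteq> 0"
  obtains t h where "t 0 \<noteq> 0" "h holomorphic_on {v. \<forall>j\<in>{..<d}-{a}. v \<noteq> z j}"
    "\<And>v. v \<in> nonpoles d z \<Longrightarrow> ratQ A d z r v = principal_part t (r a) (z a) v + h v"
proof -
  define J where "J = {..<d} - {a}"
  define G where "G = (\<Prod>i\<in>J. [:-z i, 1:] ^ r i)"
  have ra: "r a \<ge> 1" using r1 a by simp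
  have Pfac: "polP d z r = [:-z a, 1:] ^ r a * G"
    unfolding polP_def G_def J_def using a by (simp add: prod.remove)
  have Gnz: "poly G v \<noteq> 0" if "\<forall>j\<in>J. v \<noteq> z j" for v
    using that by (simp add: G_def J_def poly_prod prod_zero_iff)
  have "\<forall>j\<in>J. z a \<noteq> z j" using inj a unfolding J_def inj_on_def by blast
  then obtain T B where TB: "degree T \<le> r a - 1" "A = T * G + [:-z a, 1:] ^ r a * B"
    using partial_fraction_split[OF Gnz] by blast
  define h where "h v = poly B v / poly G v" for v
  show ?thesis
  proof
    have "poly A (z a) = poly T (z a) * poly G (z a)"
      using ra by (subst TB(2)) (simp add: zero_power)
    moreover have "coeff (pcompose T [:z a, 1:]) 0 = poly T (z a)"
      by (simp add: poly_0_coeff_0[symmetric] poly_pcompose)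
    ultimately show "coeff (pcompose T [:z a, 1:]) 0 \<noteq> 0" using Aa by auto
    show "h holomorphic_on {v. \<forall>j\<in>{..<d}-{a}. v \<noteq> z j}"
      unfolding h_def[abs_def] J_def[symmetric] using Gnz by (intro holomorphic_intros) auto
  next
    fix v assume v: "v \<in> nonpoles d z"
    then have vr: "v \<noteq> z a" and Gv: "poly G v \<noteq> 0"
      using a Gnz by (auto simp: in_nonpoles_iff J_def)
    have pp: "poly T v / (v - z a) ^ r a = principal_part (coeff (pcompose T [:z a, 1:])) (r a) (z a) v"
      using TB(1) ra vr by (intro poly_divide_power_eq_principal_part) auto
    have "ratQ A d z r v = (poly T v * poly G v + (v - z a) ^ r a * poly B v) / ((v - z a) ^ r a * poly G v)"
      unfolding ratQ_def Pfac by (subst TB(2)) (simp add: poly_mult)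
    also have "\<dots> = poly T v / (v - z a) ^ r a + h v"
      using vr Gv unfolding h_def by (simp add: field_simps)
    finally show "ratQ A d z r v = principal_part (coeff (pcompose T [:z a, 1:])) (r a) (z a) v + h v"
      by (simp only: pp)
  qed
qed

lemma compact_finite_pos_lower_bound:
  fixes f :: "'j \<Rightarrow> 'a::topological_space \<Rightarrow> real"
  assumes "finite J" "compact K" "\<forall>j\<in>J. continuous_on K (f j)" "\<forall>j\<in>J. \<forall>x\<in>K. 0 < f j x"
  shows "\<exists>e>0. \<forall>j\<in>J. \<forall>x\<in>K. e \<le> f j x"
  using assms(1,3,4)
proof (induction J rule: finite_induct)
  case empty
  then show ?case using zero_less_one by blast
next
  case (insert j J)
  then obtain e1 where e1: "e1 > 0" "\<forall>i\<in>J. \<forall>x\<in>K. e1 \<le> f i x" by auto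
  obtain e2 where e2: "e2 > 0" "\<forall>x\<in>K. e2 \<le> f j x"
  proof (cases "K = {}")
    case True
    then show ?thesis using that[of 1] by simp
  next
    case False
    then obtain x0 where "x0 \<in> K" "\<forall>x\<in>K. f j x0 \<le> f j x"
      using continuous_attains_inf[OF assms(2) False] insert.prems(1) by blast
    then show ?thesis using that insert.prems(2) by blast
  qed
  show ?case using e1 e2 by (intro exI[of _ "min e1 e2"]) force
qed

lemma uniform_cball_neighbourhood:
  fixes c :: "'j \<Rightarrow> complex"
  assumes "finite J" "compact D" and closer: "\<forall>w\<in>D. \<forall>j\<in>J. cmod (w - \<rho>) < cmod (w - c j)"
  obtains \<epsilon> Kc where "\<epsilon> > 0" "compact Kc" "\<forall>\<zeta>\<in>Kc. \<forall>j\<in>J. \<zeta> \<noteq> c j"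
    "\<forall>w\<in>D. cball w (cmod (w - \<rho>) + \<epsilon>) \<subseteq> Kc"
proof -
  have "\<exists>e>0. \<forall>j\<in>J. \<forall>w\<in>D. e \<le> cmod (w - c j) - cmod (w - \<rho>)"
    using assms by (intro compact_finite_pos_lower_bound) (auto intro!: continuous_intros)
  then obtain e where e: "e > 0" "\<forall>j\<in>J. \<forall>w\<in>D. e \<le> cmod (w - c j) - cmod (w - \<rho>)"
    by blast
  obtain B where B: "\<forall>w\<in>D. cmod w \<le> B"
    using compact_imp_bounded[OF assms(2)] unfolding bounded_iff by blast
  define \<epsilon> where "\<epsilon> = e / 2"
  define Kc where "Kc = cball 0 (2 * B + cmod \<rho> + \<epsilon>) \<inter> (\<Inter>j\<in>J. {\<zeta>. \<epsilon> \<le> cmod (\<zeta> - c j)})"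
  show ?thesis
  proof
    show "\<epsilon> > 0" using e by (simp add: \<epsilon>_def)
    then show "\<forall>\<zeta>\<in>Kc. \<forall>j\<in>J. \<zeta> \<noteq> c j" by (force simp: Kc_def)
    show "compact Kc"
      unfolding Kc_def by (intro compact_Int_closed compact_cball closed_INT ballI closed_Collect_le continuous_intros)
    show "\<forall>w\<in>D. cball w (cmod (w - \<rho>) + \<epsilon>) \<subseteq> Kc"
    proof (intro ballI subsetI)
      fix w \<zeta> assume w: "w \<in> D" and "\<zeta> \<in> cball w (cmod (w - \<rho>) + \<epsilon>)"
      then have d: "cmod (w - \<zeta>) \<le> cmod (w - \<rho>) + \<epsilon>" by (simp add: dist_norm)
      have "cmod w \<le> B" using B w by blast
      then have "cmod \<zeta> \<le> 2 * B + cmod \<rho> + \<epsilon>"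
        using d norm_triangle_ineq2[of \<zeta> w] norm_minus_commute[of \<zeta> w] norm_triangle_ineq4[of w \<rho>]
        by linarith
      moreover have "\<epsilon> \<le> cmod (\<zeta> - c j)" if "j \<in> J" for j
        using e(2) that w d norm_triangle_ineq[of "w - \<zeta>" "\<zeta> - c j"] unfolding \<epsilon>_def by force
      ultimately show "\<zeta> \<in> Kc" by (simp add: Kc_def)
    qed
  qed
qed

lemma nearest_pole_in_nonpoles:
  assumes "w \<noteq> z a" "\<forall>j\<in>{..<d}-{a}. cmod (w - z a) < cmod (w - z j)"
  shows "w \<in> nonpoles d z"
  unfolding in_nonpoles_iff
proof (intro allI impI)
  fix j assume "j < d"
  show "w \<noteq> z j"
  proof (cases "j = a")
    case False
    then have "cmod (w - z a) < cmod (w - z j)" using assms(2) \<open>j < d\<close> by blast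
    then show ?thesis by auto
  qed (use assms(1) in simp)
qed

lemma eventually_higher_deriv_ratQ_nonzero_near_pole:
  assumes r1: "\<forall>i<d. r i \<ge> 1" and inj: "inj_on z {..<d}" and Aa: "poly A (z a) \<noteq> 0"
    and a: "a < d" and "compact D"
    and closest: "\<forall>w\<in>D. \<forall>j\<in>{..<d}-{a}. cmod (w - z a) < cmod (w - z j)"
  shows "eventually (\<lambda>n. \<forall>w\<in>D - {z a}. (deriv ^^ n) (ratQ A d z r) w \<noteq> 0) sequentially"
proof -
  obtain t h where t0: "t 0 \<noteq> 0" and h: "h holomorphic_on {v. \<forall>j\<in>{..<d}-{a}. v \<noteq> z j}"
    and split: "\<And>v. v \<in> nonpoles d z \<Longrightarrow> ratQ A d z r v = principal_part t (r a) (z a) v + h v"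
    using ratQ_principal_part[OF r1 inj a Aa] by blast
  obtain \<epsilon> Kc where \<epsilon>: "\<epsilon> > 0" and "compact Kc" and Kc: "\<forall>\<zeta>\<in>Kc. \<forall>j\<in>{..<d}-{a}. \<zeta> \<noteq> z j"
    and nbhd: "\<forall>w\<in>D. cball w (cmod (w - z a) + \<epsilon>) \<subseteq> Kc"
    using uniform_cball_neighbourhood[OF _ \<open>compact D\<close> closest] by blast
  obtain B where B: "\<forall>w\<in>D. cmod w \<le> B"
    using compact_imp_bounded[OF \<open>compact D\<close>] unfolding bounded_iff by blast
  define L where "L = max 1 (B + cmod (z a))"
  have "h holomorphic_on Kc"
    by (rule holomorphic_on_subset[OF h]) (use Kc in blast)
  moreover have "\<forall>w\<in>D. cmod (w - z a) \<le> L \<and> cball w (cmod (w - z a) + \<epsilon>) \<subseteq> Kc"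
  proof (intro ballI conjI)
    fix w assume w: "w \<in> D"
    then have "cmod (w - z a) \<le> B + cmod (z a)"
      using B norm_triangle_ineq4[of w "z a"] by fastforce
    then show "cmod (w - z a) \<le> L"
      unfolding L_def by (rule max.coboundedI2)
    show "cball w (cmod (w - z a) + \<epsilon>) \<subseteq> Kc"
      using nbhd w by blast
  qed
  ultimately have "eventually (\<lambda>n. \<forall>w\<in>D - {z a}.
      (deriv ^^ n) (\<lambda>v. principal_part t (r a) (z a) v + h v) w \<noteq> 0) sequentially"
    using t0 r1 a \<epsilon> \<open>compact Kc\<close>
    by (intro eventually_higher_deriv_principal_part_nonzero) (auto simp: L_def)
  moreover have "(deriv ^^ n) (ratQ A d z r) w = (deriv ^^ n) (\<lambda>v. principal_part t (r a) (z a) v + h v) w"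
    if "w \<in> D - {z a}" for n w
  proof -
    have "w \<in> nonpoles d z"
      using that closest by (intro nearest_pole_in_nonpoles) auto
    then have "eventually (\<lambda>v. ratQ A d z r v = principal_part t (r a) (z a) v + h v) (nhds w)"
      by (rule eventually_mono[OF eventually_nhds_in_open[OF open_nonpoles]]) (rule split)
    then show ?thesis
      by (rule higher_deriv_cong_ev[OF _ refl])
  qed
  ultimately show ?thesis
    by (simp add: eventually_mono)
qed

lemma eventually_deriv_num_nonzero_on_cell:
  assumes r1: "\<forall>i<d. r i \<ge> 1" and inj: "inj_on z {..<d}" and Anz: "\<forall>i<d. poly A (z i) \<noteq> 0"
    and a: "a < d" and "compact D"
    and closest: "\<forall>w\<in>D. \<forall>j\<in>{..<d}-{a}. cmod (w - z a) < cmod (w - z j)"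
  shows "eventually (\<lambda>n. \<forall>w\<in>D. poly (deriv_num A d z r n) w \<noteq> 0) sequentially"
  using eventually_higher_deriv_ratQ_nonzero_near_pole[OF r1 inj Anz[rule_format, OF a] a \<open>compact D\<close> closest]
proof (rule eventually_mono, intro ballI)
  fix n w
  assume nz: "\<forall>w\<in>D - {z a}. (deriv ^^ n) (ratQ A d z r) w \<noteq> 0" and w: "w \<in> D"
  show "poly (deriv_num A d z r n) w \<noteq> 0"
  proof (cases "w = z a")
    case True
    then show ?thesis using deriv_num_at_pole_nonzero[OF a inj] Anz r1 a by auto
  next
    case False
    then have "w \<in> nonpoles d z"
      using w closest by (intro nearest_pole_in_nonpoles) auto
    then have "(deriv ^^ n) (ratQ A d z r) w
        = poly (deriv_num A d z r n) w / poly (polP d z r * polP0 d z ^ n) w"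
      by (rule higher_deriv_ratQ[OF r1])
    then show ?thesis using nz w False by auto
  qed
qed

section \<open>Voronoi cells\<close>

definition closest_cell :: "nat \<Rightarrow> (nat \<Rightarrow> complex) \<Rightarrow> nat \<Rightarrow> complex set" where
  "closest_cell d z a = {w. \<forall>j<d. cmod (w - z a) \<le> cmod (w - z j)}"

lemma closed_closest_cell: "closed (closest_cell d z a)"
proof -
  have "closest_cell d z a = (\<Inter>j<d. {w. cmod (w - z a) \<le> cmod (w - z j)})"
    by (auto simp: closest_cell_def)
  then show ?thesis
    by (simp add: closed_INT closed_Collect_le continuous_intros)
qed

lemma ex_closest_cell:
  assumes "d \<ge> 1"
  shows "\<exists>a<d. w \<in> closest_cell d z a"
proof -
  let ?S = "(\<lambda>k. cmod (w - z k)) ` {..<d}"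
  have fin: "finite ?S" "?S \<noteq> {}" using assms by (auto simp: lessThan_empty_iff)
  obtain a where a: "a < d" "Min ?S = cmod (w - z a)"
    using Min_in[OF fin] by auto
  then show ?thesis
    using Min_le[OF fin(1)] unfolding closest_cell_def by auto
qed

lemma closest_cell_strict:
  assumes "a < d" "j < d" "j \<noteq> a" "w \<in> closest_cell d z a" "w \<notin> Vor d z"
  shows "cmod (w - z a) < cmod (w - z j)"
proof (rule ccontr)
  assume "\<not> ?thesis"
  then have eq: "cmod (w - z a) = cmod (w - z j)"
    using assms(2,4) by (force simp: closest_cell_def)
  have "Phi d z w = cmod (w - z a)"
    unfolding Phi_def using assms(1,4) by (intro Min_eqI) (auto simp: closest_cell_def)
  then have "w \<in> Vedge d z a j" "w \<in> Vedge d z j a"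
    using eq by (simp_all add: Vedge_def)
  then have "w \<in> Vor d z"
    using assms(1-3) unfolding Vor_def by (cases "a < j") force+
  then show False using assms(5) by contradiction
qed

lemma eventually_deriv_num_no_zeros_in_disc:
  assumes d1: "d \<ge> 1" and r1: "\<forall>i<d. r i \<ge> 1" and inj: "inj_on z {..<d}"
    and Anz: "\<forall>i<d. poly A (z i) \<noteq> 0" and vor: "cball 0 1 \<inter> Vor d z = {}"
  shows "eventually (\<lambda>n. \<forall>w\<in>cball 0 1. poly (deriv_num A d z r n) w \<noteq> 0) sequentially"
proof -
  have "\<forall>a\<in>{..<d}. eventually (\<lambda>n. \<forall>w\<in>cball 0 1 \<inter> closest_cell d z a.
      poly (deriv_num A d z r n) w \<noteq> 0) sequentially"
  proof (intro ballI, rule eventually_deriv_num_nonzero_on_cell[OF r1 inj Anz])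
    fix a assume "a \<in> {..<d}"
    then show "\<forall>w\<in>cball 0 1 \<inter> closest_cell d z a. \<forall>j\<in>{..<d}-{a}. cmod (w - z a) < cmod (w - z j)"
      using vor by (auto intro!: closest_cell_strict)
  qed (auto simp: compact_Int_closed closed_closest_cell)
  then have "eventually (\<lambda>n. \<forall>a\<in>{..<d}. \<forall>w\<in>cball 0 1 \<inter> closest_cell d z a.
      poly (deriv_num A d z r n) w \<noteq> 0) sequentially"
    by (simp add: eventually_ball_finite)
  then show ?thesis
    by (rule eventually_mono) (use ex_closest_cell[OF d1] in blast)
qed

section \<open>Bounds on the products of zeros\<close>

lemma higher_deriv_ratQ_at_0_le:
  assumes r1: "\<forall>i<d. r i \<ge> 1" and far: "\<forall>i<d. cmod (z i) \<ge> 1"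
  obtains M where "M \<ge> 0" "\<And>n. norm ((deriv ^^ n) (ratQ A d z r) 0) \<le> fact n * M * 2 ^ n"
proof -
  have "cball 0 (1/2) \<subseteq> nonpoles d z"
    using far by (fastforce simp: in_nonpoles_iff)
  then have hol: "ratQ A d z r holomorphic_on cball 0 (1/2)"
    unfolding ratQ_def using polP_nonzero_iff[OF r1] by (intro holomorphic_intros) auto
  obtain M where M: "\<forall>v\<in>cball 0 (1/2). cmod (ratQ A d z r v) \<le> M"
    using compact_imp_bounded[OF compact_continuous_image[OF holomorphic_on_imp_continuous_on[OF hol]]]
    unfolding bounded_iff by auto
  show ?thesis
  proof (rule that)
    have "cmod (ratQ A d z r 0) \<le> M" using M by simp
    then show "M \<ge> 0" using norm_ge_zero order.trans by blast
    fix n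
    have "norm ((deriv ^^ n) (ratQ A d z r) 0) \<le> fact n * M / (1/2) ^ n"
    proof (rule Cauchy_inequality)
      show "ratQ A d z r holomorphic_on ball 0 (1/2)"
        using hol ball_subset_cball by (rule holomorphic_on_subset)
      show "continuous_on (cball 0 (1/2)) (ratQ A d z r)"
        using hol by (rule holomorphic_on_imp_continuous_on)
      show "cmod (ratQ A d z r x) \<le> M" if "cmod (0 - x) = 1/2" for x
        using M that by simp
    qed simp
    then show "norm ((deriv ^^ n) (ratQ A d z r) 0) \<le> fact n * M * 2 ^ n"
      by (simp add: power_one_over)
  qed
qed

lemma norm_poly_deriv_num_at_0_le:
  assumes r1: "\<forall>i<d. r i \<ge> 1" and far: "\<forall>i<d. cmod (z i) \<ge> 1"
  obtains M where "M \<ge> 0" "\<And>n. cmod (poly (deriv_num A d z r n) 0)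
      \<le> fact n * M * 2 ^ n * (cmod (poly (polP d z r) 0) * cmod (poly (polP0 d z) 0) ^ n)"
proof -
  let ?P = "polP d z r"
  let ?Plin = "polP0 d z"
  obtain M where "M \<ge> 0" and cauchy: "\<And>n. norm ((deriv ^^ n) (ratQ A d z r) 0) \<le> fact n * M * 2 ^ n"
    using higher_deriv_ratQ_at_0_le[OF r1 far] by blast
  have "0 \<in> nonpoles d z"
    using far by (fastforce simp: in_nonpoles_iff)
  then have "poly ?P 0 \<noteq> 0" "poly ?Plin 0 \<noteq> 0"
    using polP_nonzero_iff[OF r1] polP0_nonzero_iff by blast+
  then have den: "poly (?P * ?Plin ^ n) 0 \<noteq> 0" for n
    by (simp add: poly_mult poly_power)
  show ?thesis
  proof (rule that[OF \<open>M \<ge> 0\<close>])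
    fix n
    have "(deriv ^^ n) (ratQ A d z r) 0 = poly (deriv_num A d z r n) 0 / poly (?P * ?Plin ^ n) 0"
      by (rule higher_deriv_ratQ[OF r1 \<open>0 \<in> nonpoles d z\<close>])
    then have "poly (deriv_num A d z r n) 0 = (deriv ^^ n) (ratQ A d z r) 0 * poly (?P * ?Plin ^ n) 0"
      using den nonzero_eq_divide_eq by metis
    then have "cmod (poly (deriv_num A d z r n) 0)
        = norm ((deriv ^^ n) (ratQ A d z r) 0) * (cmod (poly ?P 0) * cmod (poly ?Plin 0) ^ n)"
      by (simp add: norm_mult norm_power poly_mult poly_power)
    then show "cmod (poly (deriv_num A d z r n) 0)
        \<le> fact n * M * 2 ^ n * (cmod (poly ?P 0) * cmod (poly ?Plin 0) ^ n)"
      using cauchy[of n] by (simp add: mult_right_mono)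
  qed
qed

lemma zprod_UNIV_deriv_num_le:
  assumes r1: "\<forall>i<d. r i \<ge> 1" and d1: "d \<ge> 1" and A0: "A \<noteq> 0"
    and dA: "degree A < degree (polP d z r)" and far: "\<forall>i<d. cmod (z i) \<ge> 1"
  obtains \<beta> \<alpha> where "\<beta> \<ge> 1" "\<alpha> \<ge> 1" "\<And>n. zprod (deriv_num A d z r n) UNIV \<le> \<beta> * \<alpha> ^ n"
proof -
  let ?P = "polP d z r"
  let ?Plin = "polP0 d z"
  obtain M where M0: "M \<ge> 0" and num: "\<And>n. cmod (poly (deriv_num A d z r n) 0)
      \<le> fact n * M * 2 ^ n * (cmod (poly ?P 0) * cmod (poly ?Plin 0) ^ n)"
    using norm_poly_deriv_num_at_0_le[OF r1 far] by blast
  define \<beta> where "\<beta> = max 1 (M * cmod (poly ?P 0) / cmod (lead_coeff A))"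
  define \<alpha> where "\<alpha> = max 1 (2 * cmod (poly ?Plin 0))"
  show ?thesis
  proof (rule that)
    show "\<beta> \<ge> 1" "\<alpha> \<ge> 1" by (simp_all add: \<beta>_def \<alpha>_def)
    fix n
    let ?N = "deriv_num A d z r n"
    have lc: "cmod (lead_coeff A) * fact n \<le> cmod (lead_coeff ?N)"
      using deriv_num_degree_lead_coeff[OF d1 A0 dA] by blast
    have lcA: "cmod (lead_coeff A) > 0" using A0 by simp
    then have "0 < cmod (lead_coeff A) * fact n" by simp
    then have "?N \<noteq> 0" using lc by auto
    then have "zprod ?N UNIV = cmod (poly ?N 0) / cmod (lead_coeff ?N)"
      by (rule zprod_UNIV)
    also have "\<dots> \<le> (fact n * M * 2 ^ n * (cmod (poly ?P 0) * cmod (poly ?Plin 0) ^ n))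
        / (cmod (lead_coeff A) * fact n)"
      using lcA M0 by (intro frac_le num lc) auto
    also have "\<dots> = (M * cmod (poly ?P 0) / cmod (lead_coeff A)) * (2 * cmod (poly ?Plin 0)) ^ n"
      using lcA by (simp add: field_simps power_mult_distrib)
    also have "\<dots> \<le> \<beta> * \<alpha> ^ n"
      unfolding \<beta>_def \<alpha>_def using M0 by (intro mult_mono power_mono) auto
    finally show "zprod ?N UNIV \<le> \<beta> * \<alpha> ^ n" .
  qed
qed

lemma eventually_zprod_deriv_num_bounds:
  assumes d2: "d \<ge> 2" and inj: "inj_on z {..<d}" and r1: "\<forall>i<d. r i \<ge> 1"
    and Anz: "\<forall>i<d. poly A (z i) \<noteq> 0" and vor: "cball 0 1 \<inter> Vor d z = {}"
    and far: "\<forall>i<d. cmod (z i) \<ge> 1" and dA: "degree A < degree (polP d z r)"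
  obtains \<beta> \<alpha> where "\<beta> \<ge> 1" "\<alpha> \<ge> 1"
    "eventually (\<lambda>n. \<forall>K. 1 \<le> zprod (deriv_num A d z r n) K \<and> zprod (deriv_num A d z r n) K \<le> \<beta> * \<alpha> ^ n
       \<and> n \<le> degree (deriv_num A d z r n)) sequentially"
proof -
  have d1: "d \<ge> 1" using d2 by simp
  then have "A \<noteq> 0" using Anz by (metis less_le_trans poly_0 zero_less_one)
  obtain \<beta> \<alpha> where \<beta>: "\<beta> \<ge> 1" and \<alpha>: "\<alpha> \<ge> 1"
    and bound: "\<And>n. zprod (deriv_num A d z r n) UNIV \<le> \<beta> * \<alpha> ^ n"
    using zprod_UNIV_deriv_num_le[OF r1 d1 \<open>A \<noteq> 0\<close> dA far] by blast
  have deg: "n \<le> degree (deriv_num A d z r n)" for n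
  proof -
    have "n \<le> n * (d - 1)" using d2 by (cases "d - 1") auto
    moreover have "degree (deriv_num A d z r n) = degree A + n * (d - 1)"
      using deriv_num_degree_lead_coeff[OF d1 \<open>A \<noteq> 0\<close> dA] by blast
    ultimately show ?thesis by linarith
  qed
  have "eventually (\<lambda>n. \<forall>K. 1 \<le> zprod (deriv_num A d z r n) K
      \<and> zprod (deriv_num A d z r n) K \<le> \<beta> * \<alpha> ^ n \<and> n \<le> degree (deriv_num A d z r n)) sequentially"
    using eventually_deriv_num_no_zeros_in_disc[OF d1 r1 inj Anz vor]
  proof (rule eventually_mono, intro allI conjI)
    fix n K assume no_zeros: "\<forall>w\<in>cball 0 1. poly (deriv_num A d z r n) w \<noteq> 0"
    show "1 \<le> zprod (deriv_num A d z r n) K"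
      by (rule zprod_bounds_of_no_zeros_in_disc(1)[OF no_zeros])
    show "zprod (deriv_num A d z r n) K \<le> \<beta> * \<alpha> ^ n"
      using zprod_bounds_of_no_zeros_in_disc(2)[OF no_zeros] bound by (rule order.trans)
    show "n \<le> degree (deriv_num A d z r n)"
      by (rule deg)
  qed
  with \<beta> \<alpha> show ?thesis by (rule that)
qed

lemma root_and_log_bounds_of_geometric_bound:
  fixes f :: "nat \<Rightarrow> real" and m :: "nat \<Rightarrow> nat"
  assumes \<beta>: "\<beta> \<ge> 1" and \<alpha>: "\<alpha> \<ge> 1"
    and "eventually (\<lambda>n. 1 \<le> f n \<and> f n \<le> \<beta> * \<alpha> ^ n \<and> n \<le> m n) sequentially"
  shows "(\<exists>B. \<forall>n. f n powr (1 / real n) \<le> B) \<and>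
         (\<exists>C N. \<forall>n\<ge>N. 0 \<le> ln (f n) / real (m n) \<and> ln (f n) / real (m n) \<le> C)"
proof
  obtain N0 where N0: "\<forall>n\<ge>N0. 1 \<le> f n \<and> f n \<le> \<beta> * \<alpha> ^ n \<and> n \<le> m n"
    using assms(3) unfolding eventually_sequentially by blast
  define N where "N = Suc N0"
  have f: "1 \<le> f n" "f n \<le> \<beta> * \<alpha> ^ n" "n \<le> m n" "1 \<le> n" if "n \<ge> N" for n
    using N0 that by (auto simp: N_def)
  have root: "f n powr (1 / real n) \<le> \<beta> * \<alpha>" if n: "n \<ge> N" for n
  proof -
    have "f n powr (1 / real n) \<le> (\<beta> * \<alpha> ^ n) powr (1 / real n)"
      using f[OF n] by (intro powr_mono2) auto
    also have "\<dots> = \<beta> powr (1 / real n) * \<alpha>"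
      using \<beta> \<alpha> f(4)[OF n] by (simp add: powr_mult powr_realpow[symmetric] powr_powr)
    also have "\<dots> \<le> \<beta> powr 1 * \<alpha>"
      using \<beta> \<alpha> f(4)[OF n] by (intro mult_right_mono powr_mono) auto
    finally show ?thesis using \<beta> by simp
  qed
  define B where "B = max (\<beta> * \<alpha>) (Max ((\<lambda>n. f n powr (1 / real n)) ` {..<N}))"
  have "f n powr (1 / real n) \<le> B" for n
    using root[of n] by (cases "n < N") (auto simp: B_def le_max_iff_disj)
  then show "\<exists>B. \<forall>n. f n powr (1 / real n) \<le> B" by blast
  have "0 \<le> ln (f n) / real (m n) \<and> ln (f n) / real (m n) \<le> ln \<beta> + ln \<alpha>" if n: "n \<ge> N" for n
  proof -
    have "ln (f n) \<le> ln (\<beta> * \<alpha> ^ n)"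
      using f[OF n] by (subst ln_le_cancel_iff) auto
    also have "\<dots> = ln \<beta> + real n * ln \<alpha>"
      using \<beta> \<alpha> by (simp add: ln_mult ln_realpow)
    also have "\<dots> \<le> real (m n) * ln \<beta> + real (m n) * ln \<alpha>"
      using f[OF n] \<beta> \<alpha> by (intro add_mono mult_right_mono) (auto simp: mult_le_cancel_right1)
    finally show ?thesis
      using f[OF n] by (simp add: divide_le_eq algebra_simps)
  qed
  then show "\<exists>C N. \<forall>n\<ge>N. 0 \<le> ln (f n) / real (m n) \<and> ln (f n) / real (m n) \<le> C"
    by blast
qed

theorem lemma4p6:
  fixes A :: "complex poly" and d :: nat and z :: "nat \<Rightarrow> complex"
    and r :: "nat \<Rightarrow> nat" and R :: real
  assumes "d \<ge> 2"
    and "inj_on z {..<d}"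
    and "\<forall>i<d. r i \<ge> 1"
    and "\<forall>i<d. poly A (z i) \<noteq> 0"
    and "cball 0 1 \<inter> Vor d z = {}"
    and "\<forall>i<d. cmod (z i) \<ge> 1"
    and "R > 0"
  shows "\<forall>K \<in> {cball 0 R, UNIV - cball 0 R}.
           (\<exists>B. \<forall>n. zprod (polR A d z r n) K powr (1 / real n) \<le> B) \<and>
           (\<exists>C N. \<forall>n\<ge>N.
              0 \<le> ln (zprod (polR A d z r n) K) / real (degree (polR A d z r n)) \<and>
              ln (zprod (polR A d z r n) K) / real (degree (polR A d z r n)) \<le> C)"
proof -
  define A' where "A' = A mod polP d z r"
  have A'nz: "\<forall>i<d. poly A' (z i) \<noteq> 0"
    using assms(4) poly_mod_polP_at_pole[OF assms(3)] unfolding A'_def by simp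
  then have "A' \<noteq> 0" using assms(1) by (metis less_le_trans poly_0 pos2)
  then have "degree A' < degree (polP d z r)"
    unfolding A'_def by (rule degree_mod_less'[OF polP_neq_0])
  then obtain \<beta> \<alpha> where \<beta>: "\<beta> \<ge> 1" and \<alpha>: "\<alpha> \<ge> 1"
    and bounds: "eventually (\<lambda>n. \<forall>K. 1 \<le> zprod (deriv_num A' d z r n) K
       \<and> zprod (deriv_num A' d z r n) K \<le> \<beta> * \<alpha> ^ n \<and> n \<le> degree (deriv_num A' d z r n)) sequentially"
    using eventually_zprod_deriv_num_bounds[OF assms(1-3) A'nz assms(5,6)] by blast
  have "eventually (\<lambda>n. 1 \<le> zprod (polR A d z r n) K \<and> zprod (polR A d z r n) K \<le> \<beta> * \<alpha> ^ n
      \<and> n \<le> degree (polR A d z r n)) sequentially" for K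
    using eventually_numQ_eq_deriv_num_mod[OF assms(3), of A z] bounds
    by eventually_elim (simp add: zprod_polR degree_polR A'_def)
  then show ?thesis
    by (intro ballI root_and_log_bounds_of_geometric_bound[OF \<beta> \<alpha>])
qed

end
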